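(* Fix $V_{\sf P}\ge 0$ and $\delta\in[0,1)$. There exists $p_0=p_0(\delta,V_{\sf P})\in(0,1]$ such that for every $p\in(0,p_0]$ (with $p<1$), the policy ${\sf APP}$ maximizes ${\sf Eng}(\pi)$ over all online policies $\pi$. Moreover, $$ {\sf Eng}({\sf APP})=\frac{1}{1-\delta}\cdot\frac{2e^{V_{\sf P}}}{1+2e^{V_{\sf P}}},\qquad {\sf Util}({\sf APP})=\frac{1}{1-\delta}\ln\!\left(1+2e^{V_{\sf P}}\right).$$
   Context: Model. Time $t=0,1,2,\dots$, discount factor $\delta\in[0,1)$. There are two item types, popular ${\sf P}$ and niche ${\sf N}$, each with infinitely many items. At each time $t$ the platform recommends a set $\pi_t$ of two items, each of which is a fresh (never previously recommended) item of a chosen type; so effectively it chooses one of the type pairs $\{{\sf P},{\sf P}\}$, $\{{\sf P},{\sf N}\}$, $\{{\sf N},{\sf N}\}$. The user's utility for an item $i$ of type $\tau(i)$ is $u_i=V_{\tau(i)}+\epsilon_i$, and for the outside option $\emptyset$ it is $u_\emptyset=\epsilon_\emptyset$ (base utility $0$). All noise terms $\epsilon$ (across items, the outside option, and time) are i.i.d. Gumbel with scale $1$ and mean $0$, i.e. CDF $x\mapsto\exp(-\exp(-(x+\gamma)))$ with $\gamma$ the Euler–Mascheroni constant. At each time the user chooses $c_t=\arg\max_{j\in\pi_t\cup\{\emptyset\}}u_j$. The popular base utility $V_{\sf P}$ is a known constant. The niche base utility $V_{\sf N}$ is a random variable drawn once (for the user, fixed over time, independent of the noise) with $\mathbb P(V_{\sf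 N}=(1-p)/p)=p$ and $\mathbb P(V_{\sf N}=-1)=1-p$, where $p\in(0,1)$; this distribution is known to the platform but the realization is not. An online policy is a (possibly randomized) rule choosing $\pi_t$ based only on the history $\{(\pi_s,c_s)\}_{s<t}$. For a policy $\pi$, ${\sf Eng}(\pi)=\sum_{t\ge0}\delta^t\,\mathbb P(c_t\ne\emptyset)$ and ${\sf Util}(\pi)=\sum_{t\ge0}\delta^t\,\mathbb E[\max_{j\in\pi_t\cup\{\emptyset\}}u_j]$, where expectations are also over $V_{\sf N}$. The Always Popular Policy ${\sf APP}$ recommends two popular items at every time $t$. *)

theory Defs
  imports "HOL-Probability.Probability"
begin

text \<open>Gumbel noise with scale 1 and mean 0: CDF  x \<mapsto> exp(-exp(-(x+gamma))),
  given here by its density (the derivative of that CDF) w.r.t. Lebesgue measure.\<close>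
definition gumbel_density :: "real \<Rightarrow> real" where
  "gumbel_density x = exp (-(x + euler_mascheroni)) * exp (- exp (-(x + euler_mascheroni)))"

definition gumbel :: "real measure" where
  "gumbel = density lborel (\<lambda>x. ennreal (gumbel_density x))"

text \<open>Independent noise for one time step: (eps_outside, (eps_slot1, eps_slot2)).\<close>
definition noise3 :: "(real \<times> real \<times> real) measure" where
  "noise3 = gumbel \<Otimes>\<^sub>M (gumbel \<Otimes>\<^sub>M gumbel)"

text \<open>Item types and the three possible recommended type pairs (two fresh items).\<close>
datatype itype = Pop | Nic
datatype action = PP | PN | NN
datatype outcome = Out | First | Second

fun slot1 :: "action \<Rightarrow> itype" where
  "slot1 PP = Pop" | "slot1 PN = Pop" | "slot1 NN = Nic"
fun slot2 :: "action \<Rightarrow> itype" where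
  "slot2 PP = Pop" | "slot2 PN = Nic" | "slot2 NN = Nic"

fun base :: "real \<Rightarrow> real \<Rightarrow> itype \<Rightarrow> real" where
  "base VP vN Pop = VP" | "base VP vN Nic = vN"

definition u_out :: "real \<times> real \<times> real \<Rightarrow> real" where
  "u_out e = fst e"
definition u_1 :: "real \<Rightarrow> real \<Rightarrow> action \<Rightarrow> real \<times> real \<times> real \<Rightarrow> real" where
  "u_1 VP vN a e = base VP vN (slot1 a) + fst (snd e)"
definition u_2 :: "real \<Rightarrow> real \<Rightarrow> action \<Rightarrow> real \<times> real \<times> real \<Rightarrow> real" where
  "u_2 VP vN a e = base VP vN (slot2 a) + snd (snd e)"

text \<open>The user's choice: argmax of the utilities (ties, a null event, broken arbitrarily).\<close>
definition choice :: "real \<Rightarrow> real \<Rightarrow> action \<Rightarrow> real \<times> real \<times> real \<Rightarrow> outcome" where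
  "choice VP vN a e =
     (if u_out e \<ge> u_1 VP vN a e \<and> u_out e \<ge> u_2 VP vN a e then Out
      else if u_1 VP vN a e \<ge> u_2 VP vN a e then First else Second)"

definition outcome_prob :: "real \<Rightarrow> real \<Rightarrow> action \<Rightarrow> outcome \<Rightarrow> real" where
  "outcome_prob VP vN a c = measure noise3 {e \<in> space noise3. choice VP vN a e = c}"

definition engage_prob :: "real \<Rightarrow> real \<Rightarrow> action \<Rightarrow> real" where
  "engage_prob VP vN a = measure noise3 {e \<in> space noise3. choice VP vN a e \<noteq> Out}"

definition exp_max_util :: "real \<Rightarrow> real \<Rightarrow> action \<Rightarrow> real" where
  "exp_max_util VP vN a =
     integral\<^sup>L noise3 (\<lambda>e. max (u_out e) (max (u_1 VP vN a e) (u_2 VP vN a e)))"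

text \<open>Online (possibly randomized) policies: a history is the list of past
  (recommended pair, observed choice); the policy maps it to a distribution over actions.\<close>
type_synonym history = "(action \<times> outcome) list"
type_synonym policy = "history \<Rightarrow> action pmf"

definition all_actions :: "action set" where
  "all_actions = {PP, PN, NN}"
definition all_steps :: "(action \<times> outcome) set" where
  "all_steps = all_actions \<times> {Out, First, Second}"

definition histories :: "nat \<Rightarrow> history set" where
  "histories t = {h. set h \<subseteq> all_steps \<and> length h = t}"

definition hist_prob :: "real \<Rightarrow> policy \<Rightarrow> real \<Rightarrow> history \<Rightarrow> real" where
  "hist_prob VP pol vN h =
     (\<Prod>s<length h. pmf (pol (take s h)) (fst (h ! s)) * outcome_prob VP vN (fst (h ! s)) (snd (h ! s)))"

text \<open>Prior on V_N: (1-p)/p with probability p and -1 with probability 1-p.\<close>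
definition vN_high :: "real \<Rightarrow> real" where "vN_high p = (1 - p) / p"
definition vN_low :: real where "vN_low = -1"

definition cond_expect :: "real \<Rightarrow> policy \<Rightarrow> nat \<Rightarrow> (action \<Rightarrow> real \<Rightarrow> real) \<Rightarrow> real \<Rightarrow> real" where
  "cond_expect VP pol t g vN =
     (\<Sum>h \<in> histories t. hist_prob VP pol vN h *
        (\<Sum>a \<in> all_actions. pmf (pol h) a * g a vN))"

definition step_expect :: "real \<Rightarrow> real \<Rightarrow> policy \<Rightarrow> nat \<Rightarrow> (action \<Rightarrow> real \<Rightarrow> real) \<Rightarrow> real" where
  "step_expect VP p pol t g =
     p * cond_expect VP pol t g (vN_high p) + (1 - p) * cond_expect VP pol t g vN_low"

definition Eng :: "real \<Rightarrow> real \<Rightarrow> real \<Rightarrow> policy \<Rightarrow> real" where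
  "Eng VP \<delta> p pol = (\<Sum>t. \<delta> ^ t * step_expect VP p pol t (\<lambda>a vN. engage_prob VP vN a))"

definition Util :: "real \<Rightarrow> real \<Rightarrow> real \<Rightarrow> policy \<Rightarrow> real" where
  "Util VP \<delta> p pol = (\<Sum>t. \<delta> ^ t * step_expect VP p pol t (\<lambda>a vN. exp_max_util VP vN a))"

definition APP :: policy where
  "APP = (\<lambda>h. return_pmf PP)"

end

theory Submission
  imports Defs
begin

(* With Gumbel noise the user's choice follows the logit model: a pair of items with base
   utilities v1, v2 is engaged with probability (e^v1 + e^v2) / (1 + e^v1 + e^v2), and by
   max-stability the realized maximal utility is a Gumbel variable shifted by
   ln (1 + e^v1 + e^v2); its mean is that shift because the Gumbel law has mean zero, which
   reduces to the integral of ln t e^-t over (0, oo) being Gamma'(1) = -gamma. Hence APP earns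
   E = 2 e^V_P / (1 + 2 e^V_P) at every step.

   For an arbitrary policy let x t be the probability that a niche item was recommended before
   time t; x does not depend on V_N, because the outcomes of PP steps do not. Compared with E,
   at step t a user with high V_N yields at most (1 - E) x (t + 1) extra engagement, while a user
   with V_N = -1 loses at least c (x (t + 1) - x t) for some c > 0. After discounting, the
   increments of x sum to (1 - delta) times the values of x, so the expected loss outweighs the
   gain once p (1 - E) <= (1 - p) c (1 - delta). *)

section \<open>The integral of ln t against e^-t\<close>

lemma Gamma_has_integral_greaterThan:
  assumes "x > (0::real)"
  shows "((\<lambda>t. t powr (x - 1) / exp t) has_integral Gamma x) {0<..}"
proof -
  have "((\<lambda>t. t powr (x - 1) / exp t) has_integral Gamma x) {0..}"
    by (rule Gamma_integral_real) fact
  hence "((\<lambda>t. if t \<in> {0<..} then t powr (x - 1) / exp t else 0) has_integral Gamma x) {0..}"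
    by (rule has_integral_spike [of "{0}", rotated 2]) auto
  also have "?this = ?thesis"
    by (subst has_integral_restrict) auto
  finally show ?thesis .
qed

lemma LIMSEQ_difference_quotient:
  fixes f :: "real \<Rightarrow> real"
  assumes "(f has_real_derivative D) (at x)"
  shows "(\<lambda>k. (f (x + 1 / real (Suc k)) - f x) / (1 / real (Suc k))) \<longlonglongrightarrow> D"
proof -
  have lim: "((\<lambda>y. (f y - f x) / (y - x)) \<longlongrightarrow> D) (at x)"
    using assms by (simp add: has_field_derivative_iff)
  have "(\<lambda>k. x + 1 / real (Suc k)) \<longlonglongrightarrow> x"
    using tendsto_add[OF tendsto_const[of x] LIMSEQ_inverse_real_of_nat]
    by (simp add: inverse_eq_divide)
  hence "filterlim (\<lambda>k. x + 1 / real (Suc k)) (at x) sequentially"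
    unfolding filterlim_at by auto
  from filterlim_compose[OF lim this] show ?thesis by (simp add: o_def)
qed

lemma abs_exp_minus_one_le: "\<bar>exp (u::real) - 1\<bar> \<le> \<bar>u\<bar> * (1 + exp u)"
proof (cases "u \<ge> 0")
  case True
  have "1 - u \<le> exp (-u)" using exp_ge_add_one_self[of "-u"] by simp
  hence "exp u * (1 - u) \<le> exp u * exp (-u)" by (intro mult_left_mono) auto
  hence "exp u - u * exp u \<le> 1" by (simp add: exp_minus field_simps)
  moreover have "exp u \<ge> 1" using True by simp
  ultimately show ?thesis using True by (simp add: algebra_simps)
next
  case False
  have "1 + u \<le> exp u" using exp_ge_add_one_self[of u] by simp
  moreover have "exp u \<le> 1" using False by simp
  moreover have "u * exp u \<le> 0" using False by (simp add: mult_nonpos_nonneg)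
  moreover have "\<bar>u\<bar> * (1 + exp u) = -u - u * exp u" using False by (simp add: algebra_simps)
  moreover have "\<bar>exp u - 1\<bar> = 1 - exp u" using \<open>exp u \<le> 1\<close> by simp
  ultimately show ?thesis by linarith
qed

lemma abs_ln_le:
  assumes "t > (0::real)"
  shows "\<bar>ln t\<bar> \<le> 2 * t powr (-1/2) + t"
proof (cases "t \<ge> 1")
  case True
  have "ln t \<le> t - 1" using assms by (rule ln_le_minus_one)
  moreover have "ln t \<ge> 0" using True by simp
  moreover have "t powr (-1/2) \<ge> 0" by simp
  ultimately show ?thesis by linarith
next
  case False
  have "ln (t powr (-1/2)) \<le> t powr (-1/2) - 1" using assms by (intro ln_le_minus_one) simp
  hence "- ln t / 2 \<le> t powr (-1/2) - 1" using assms by (simp add: ln_powr)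
  moreover have "ln t \<le> 0" using False assms by simp
  ultimately show ?thesis using assms by simp
qed

lemma powr_le_one_plus:
  assumes "t > (0::real)" "0 \<le> h" "h \<le> 1"
  shows "t powr h \<le> 1 + t"
proof (cases "t \<le> 1")
  case True
  hence "t powr h \<le> 1 powr h" using assms by (intro powr_mono2) auto
  thus ?thesis using assms by simp
next
  case False
  hence "t powr h \<le> t powr 1" using assms by (intro powr_mono) auto
  thus ?thesis using assms by simp
qed

definition ln_exp_majorant :: "real \<Rightarrow> real" where
  "ln_exp_majorant t = (2 * t powr (-1/2) + t) * (2 + t) / exp t"

lemma integrable_ln_exp_majorant: "ln_exp_majorant integrable_on {0<..}"
proof -
  have Gamma: "(\<lambda>t. t powr (a - 1) / exp t) integrable_on {0<..}" if "a > 0" for a :: real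
    using Gamma_has_integral_greaterThan[OF that] by blast
  have "(\<lambda>t::real. 4 * (t powr (1/2 - 1) / exp t) + 2 * (t powr (3/2 - 1) / exp t)
        + 2 * (t powr (2 - 1) / exp t) + (t powr (3 - 1) / exp t)) integrable_on {0<..}"
    by (intro integrable_add integrable_on_mult_right Gamma) auto
  moreover have "4 * (t powr (1/2 - 1) / exp t) + 2 * (t powr (3/2 - 1) / exp t)
        + 2 * (t powr (2 - 1) / exp t) + (t powr (3 - 1) / exp t) = ln_exp_majorant t"
    if "t \<in> {0<..}" for t
  proof -
    have t: "t > 0" using that by simp
    have "t powr (3/2 - 1) = t powr (-1/2 + 1)" by simp
    also have "\<dots> = t powr (-1/2) * t powr 1" by (rule powr_add)
    also have "\<dots> = t powr (-1/2) * t" using t by simp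
    finally have "t powr (3/2 - 1) = t powr (-1/2) * t" .
    moreover have "t powr (1/2 - 1) = t powr (-1/2)" by simp
    moreover have "t powr (2 - 1) = t" using t by simp
    moreover have "t powr (3 - 1) = t * t"
      using t by (simp add: powr_add[symmetric] powr_numeral power2_eq_square)
    ultimately show ?thesis unfolding ln_exp_majorant_def by (simp add: field_simps)
  qed
  ultimately show ?thesis using integrable_eq by (metis (no_types, lifting))
qed

lemma abs_powr_difference_quotient_le:
  assumes t: "t > (0::real)" and h: "0 < h" "h \<le> 1"
  shows "\<bar>(t powr h - 1) / h / exp t\<bar> \<le> ln_exp_majorant t"
proof -
  have "\<bar>t powr h - 1\<bar> \<le> \<bar>h * ln t\<bar> * (1 + t powr h)"
    using abs_exp_minus_one_le[of "h * ln t"] t by (simp add: powr_def)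
  also have "\<dots> \<le> \<bar>h * ln t\<bar> * (2 + t)"
    using powr_le_one_plus[OF t, of h] h by (intro mult_left_mono) auto
  finally have "\<bar>t powr h - 1\<bar> / h \<le> \<bar>ln t\<bar> * (2 + t)"
    using h by (simp add: abs_mult field_simps)
  also have "\<dots> \<le> (2 * t powr (-1/2) + t) * (2 + t)"
    using abs_ln_le[OF t] t by (intro mult_right_mono) auto
  finally have "\<bar>t powr h - 1\<bar> / h / exp t \<le> (2 * t powr (-1/2) + t) * (2 + t) / exp t"
    by (intro divide_right_mono) auto
  thus ?thesis
    using h unfolding ln_exp_majorant_def by (simp add: abs_divide)
qed

text \<open>Dominated convergence for (t^h - 1)/h \<rightarrow> ln t as h \<rightarrow> 0: the integrals
  (\<Gamma>(1 + h) - \<Gamma>(1))/h tend to \<Gamma>'(1) = \<Gamma>(1) \<psi>(1) = -\<gamma>.\<close>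
lemma ln_div_exp_has_integral:
  "((\<lambda>t::real. ln t / exp t) has_integral - euler_mascheroni) {0<..}"
proof -
  define h where "h k = 1 / real (Suc k)" for k
  have h: "0 < h k" "h k \<le> 1" for k unfolding h_def by (auto simp: field_simps)
  define f where "f k t = (t powr h k - 1) / h k / exp t" for k t
  define y where "y k = (Gamma (1 + h k) - Gamma 1) / h k" for k
  have f_integral: "(f k has_integral y k) {0<..}" for k
  proof -
    have "((\<lambda>t. (t powr (1 + h k - 1) / exp t - t powr (1 - 1) / exp t) / h k)
           has_integral (Gamma (1 + h k) - Gamma 1) / h k) {0<..}"
      using h[of k] by (intro has_integral_divide has_integral_diff Gamma_has_integral_greaterThan) auto
    thus ?thesis unfolding f_def y_def
      by (rule has_integral_eq[rotated]) (simp add: field_simps)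
  qed
  have "(Gamma has_real_derivative Gamma 1 * Digamma 1) (at (1::real))"
    by (rule has_field_derivative_Gamma) (simp add: nonpos_Ints_def)
  hence y_limit: "y \<longlonglongrightarrow> - euler_mascheroni"
    using LIMSEQ_difference_quotient unfolding y_def h_def by fastforce
  have f_limit: "(\<lambda>k. f k t) \<longlonglongrightarrow> ln t / exp t" if "t \<in> {0<..}" for t
  proof -
    have "((\<lambda>s. exp (s * ln t)) has_real_derivative exp (0 * ln t) * ln t) (at 0)"
      by (auto intro!: derivative_eq_intros)
    hence "(\<lambda>k. (exp ((0 + h k) * ln t) - exp (0 * ln t)) / h k / exp t) \<longlonglongrightarrow> ln t / exp t"
      unfolding h_def by (intro tendsto_divide tendsto_const LIMSEQ_difference_quotient) auto
    thus ?thesis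
      using that unfolding f_def by (simp add: powr_def)
  qed
  have bound: "\<forall>t\<in>{0<..}. norm (f k t) \<le> ln_exp_majorant t" for k
    using abs_powr_difference_quotient_le[OF _ h] unfolding f_def real_norm_def by blast
  show ?thesis
    by (rule has_integral_dominated_convergence[OF f_integral integrable_ln_exp_majorant bound _ y_limit])
      (use f_limit in auto)
qed

lemma ln_div_exp_absolutely_integrable:
  "(\<lambda>t::real. ln t / exp t) absolutely_integrable_on {0<..}"
proof (rule absolutely_integrable_integrable_bound[OF _ _ integrable_ln_exp_majorant])
  show "(\<lambda>t::real. ln t / exp t) integrable_on {0<..}"
    using ln_div_exp_has_integral by blast
next
  fix t :: real assume "t \<in> {0<..}"
  hence t: "t > 0" by simp
  have "\<bar>ln t\<bar> \<le> (2 * t powr (-1/2) + t) * 1" using abs_ln_le[OF t] by simp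
  also have "\<dots> \<le> (2 * t powr (-1/2) + t) * (2 + t)" using t by (intro mult_left_mono) auto
  finally show "norm (ln t / exp t) \<le> ln_exp_majorant t"
    unfolding ln_exp_majorant_def by (simp add: abs_divide divide_right_mono)
qed

lemma exponential_density_times_ln:
  "integrable lborel (\<lambda>x. exponential_density 1 x * ln x)"
  "(\<integral>x. exponential_density 1 x * ln x \<partial>lborel) = - euler_mascheroni"
proof -
  have density_eq: "exponential_density 1 x * ln x = indicator {0<..} x *\<^sub>R (ln x / exp x)" for x
    by (auto simp: exponential_density_def exp_minus field_simps split: split_indicator)
  have meas: "(\<lambda>x::real. indicator {0<..} x *\<^sub>R (ln x / exp x)) \<in> borel_measurable lborel"
    by measurable
  have "integrable lebesgue (\<lambda>x::real. indicator {0<..} x *\<^sub>R (ln x / exp x))"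
    using ln_div_exp_absolutely_integrable unfolding set_integrable_def .
  thus "integrable lborel (\<lambda>x. exponential_density 1 x * ln x)"
    unfolding density_eq by (rule iffD1[OF integrable_completion[OF meas]])
  have "(LINT x:{0<..} | lebesgue. ln x / exp x) = integral {0<..} (\<lambda>x::real. ln x / exp x)"
    by (rule set_lebesgue_integral_eq_integral(2)[OF ln_div_exp_absolutely_integrable])
  also have "\<dots> = - euler_mascheroni"
    using ln_div_exp_has_integral by (rule integral_unique)
  finally show "(\<integral>x. exponential_density 1 x * ln x \<partial>lborel) = - euler_mascheroni"
    unfolding density_eq set_lebesgue_integral_def integral_completion[OF meas, symmetric] .
qed

section \<open>The standard Gumbel distribution\<close>

definition gumbel_cdf :: "real \<Rightarrow> real" where
  "gumbel_cdf x = exp (- exp (-(x + euler_mascheroni)))"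

lemma gumbel_cdf_pos: "0 < gumbel_cdf x"
  by (simp add: gumbel_cdf_def)

lemma borel_measurable_gumbel_cdf [measurable]: "gumbel_cdf \<in> borel_measurable borel"
  unfolding gumbel_cdf_def[abs_def] by measurable

lemma gumbel_cdf_powr: "gumbel_cdf x powr k = exp (- k * exp (-(x + euler_mascheroni)))"
  by (simp add: gumbel_cdf_def powr_def)

lemma gumbel_cdf_diff: "gumbel_cdf (x - a) = gumbel_cdf x powr exp a"
proof -
  have "exp (-(x - a + euler_mascheroni)) = exp a * exp (-(x + euler_mascheroni))"
    by (simp flip: exp_add)
  thus ?thesis unfolding gumbel_cdf_powr by (simp add: gumbel_cdf_def)
qed

lemma has_real_derivative_gumbel_cdf_powr:
  assumes "-1 < k"
  shows "((\<lambda>x. gumbel_cdf x powr (1 + k) / (1 + k)) has_real_derivative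
           gumbel_density x * gumbel_cdf x powr k) (at x)"
proof -
  let ?u = "exp (-(x + euler_mascheroni))"
  have "((\<lambda>x. exp (- (1 + k) * exp (-(x + euler_mascheroni))) / (1 + k)) has_real_derivative
          exp (- (1 + k) * ?u) * (- (1 + k) * (?u * - (1 + 0))) / (1 + k)) (at x)"
    using assms by (auto intro!: derivative_eq_intros)
  moreover have "exp (- (1 + k) * ?u) * (- (1 + k) * (?u * - (1 + 0))) / (1 + k)
      = gumbel_density x * gumbel_cdf x powr k"
    using assms by (simp add: gumbel_density_def gumbel_cdf_powr field_simps flip: exp_add)
  ultimately show ?thesis by (simp add: gumbel_cdf_powr)
qed

lemma gumbel_cdf_powr_at_bot:
  assumes "0 < k"
  shows "((\<lambda>x. gumbel_cdf x powr k) \<longlongrightarrow> 0) at_bot"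
proof -
  have "filterlim (\<lambda>x::real. exp (-(x + euler_mascheroni))) at_top at_bot"
    by real_asymp
  hence "filterlim (\<lambda>x. k * exp (-(x + euler_mascheroni))) at_top at_bot"
    using filterlim_tendsto_pos_mult_at_top[OF tendsto_const assms] by blast
  moreover have "((\<lambda>y::real. exp (- y)) \<longlongrightarrow> 0) at_top"
    by real_asymp
  ultimately show ?thesis
    unfolding gumbel_cdf_powr using filterlim_compose by fastforce
qed

lemma gumbel_cdf_powr_at_top: "((\<lambda>x. gumbel_cdf x powr k) \<longlongrightarrow> 1) at_top"
proof -
  have "((\<lambda>x::real. exp (-(x + euler_mascheroni))) \<longlongrightarrow> 0) at_top"
    by real_asymp
  hence "((\<lambda>x. exp (- k * exp (-(x + euler_mascheroni)))) \<longlongrightarrow> exp (- k * 0)) at_top"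
    by (intro tendsto_intros)
  thus ?thesis by (simp add: gumbel_cdf_powr)
qed

lemma nn_integral_gumbel_density_cdf_powr_einterval:
  assumes k: "-1 < k" and c: "-\<infinity> < c"
    and lim: "(((\<lambda>x. gumbel_cdf x powr (1 + k) / (1 + k)) \<circ> real_of_ereal) \<longlongrightarrow> B) (at_left c)"
  shows "(\<integral>\<^sup>+x. ennreal (gumbel_density x * gumbel_cdf x powr k) * indicator (einterval (-\<infinity>) c) x \<partial>lborel)
           = ennreal B"
proof -
  let ?g = "\<lambda>x. gumbel_density x * gumbel_cdf x powr k"
  have nonneg: "0 \<le> ?g x" for x
    by (simp add: gumbel_density_def)
  have cont: "isCont ?g x" for x
    unfolding gumbel_density_def gumbel_cdf_powr by (intro continuous_intros)
  have "(((\<lambda>x. gumbel_cdf x powr (1 + k) / (1 + k)) \<circ> real_of_ereal) \<longlongrightarrow> 0 / (1 + k)) (at_right (-\<infinity>))"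
    unfolding ereal_tendsto_simps1 using k by (intro tendsto_divide gumbel_cdf_powr_at_bot tendsto_const) auto
  note FTC = interval_integral_FTC_nonneg[OF c has_real_derivative_gumbel_cdf_powr[OF k] cont _
      this[simplified] lim]
  have "set_integrable lborel (einterval (-\<infinity>) c) ?g"
    using FTC(1) nonneg by simp
  hence "(\<integral>\<^sup>+x. ennreal (indicator (einterval (-\<infinity>) c) x *\<^sub>R ?g x) \<partial>lborel)
      = ennreal (\<integral>x. indicator (einterval (-\<infinity>) c) x *\<^sub>R ?g x \<partial>lborel)"
    unfolding set_integrable_def
    by (intro nn_integral_eq_integral) (auto simp: nonneg split: split_indicator)
  also have "(\<integral>x. indicator (einterval (-\<infinity>) c) x *\<^sub>R ?g x \<partial>lborel) = B"
    using FTC(2) nonneg c unfolding interval_lebesgue_integral_def set_lebesgue_integral_def by simp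
  finally show ?thesis
    by (simp add: indicator_mult_ennreal mult.commute)
qed

lemma nn_integral_gumbel_density_cdf_powr:
  assumes "-1 < k"
  shows "(\<integral>\<^sup>+x. ennreal (gumbel_density x * gumbel_cdf x powr k) \<partial>lborel) = ennreal (1 / (1 + k))"
proof -
  have "(((\<lambda>x. gumbel_cdf x powr (1 + k) / (1 + k)) \<circ> real_of_ereal) \<longlongrightarrow> 1 / (1 + k)) (at_left \<infinity>)"
    unfolding ereal_tendsto_simps1 using assms
    by (intro tendsto_divide gumbel_cdf_powr_at_top tendsto_const) simp
  from nn_integral_gumbel_density_cdf_powr_einterval[OF assms _ this] show ?thesis
    by simp
qed

lemma emeasure_gumbel:
  assumes "A \<in> sets borel"
  shows "emeasure gumbel A = (\<integral>\<^sup>+x. ennreal (gumbel_density x) * indicator A x \<partial>lborel)"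
  unfolding gumbel_def using assms by (subst emeasure_density) (auto simp: gumbel_density_def)

lemma sets_gumbel [simp, measurable_cong]: "sets gumbel = sets borel"
  by (simp add: gumbel_def)

lemma space_gumbel [simp]: "space gumbel = UNIV"
  by (simp add: gumbel_def)

lemma prob_space_gumbel: "prob_space gumbel"
proof
  have "emeasure gumbel UNIV = (\<integral>\<^sup>+x. ennreal (gumbel_density x * gumbel_cdf x powr 0) \<partial>lborel)"
    by (simp add: emeasure_gumbel gumbel_cdf_def)
  also have "\<dots> = 1"
    using nn_integral_gumbel_density_cdf_powr[of 0] by (simp add: gumbel_cdf_def)
  finally show "emeasure gumbel (space gumbel) = 1" by simp
qed

interpretation gumbel: prob_space gumbel
  by (rule prob_space_gumbel)

lemma emeasure_gumbel_lessThan: "emeasure gumbel {..<b} = ennreal (gumbel_cdf b)"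
proof -
  have "isCont gumbel_cdf b"
    unfolding gumbel_cdf_def[abs_def] by (intro continuous_intros)
  moreover have "(\<lambda>x. gumbel_cdf x powr (1 + 0) / (1 + 0)) = gumbel_cdf"
    by (simp add: fun_eq_iff gumbel_cdf_def)
  ultimately have "(((\<lambda>x. gumbel_cdf x powr (1 + 0) / (1 + 0)) \<circ> real_of_ereal) \<longlongrightarrow> gumbel_cdf b) (at_left (ereal b))"
    unfolding ereal_tendsto_simps1 by (simp add: filterlim_at_split isCont_def)
  from nn_integral_gumbel_density_cdf_powr_einterval[of 0, OF _ _ this] show ?thesis
    by (simp add: emeasure_gumbel gumbel_cdf_def)
qed

lemma emeasure_gumbel_atMost: "emeasure gumbel {..b} = ennreal (gumbel_cdf b)"
proof -
  have "emeasure gumbel {..b} = (\<integral>\<^sup>+x. ennreal (gumbel_density x) * indicator {..b} x \<partial>lborel)"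
    by (simp add: emeasure_gumbel)
  also have "\<dots> = (\<integral>\<^sup>+x. ennreal (gumbel_density x) * indicator {..<b} x \<partial>lborel)"
    using AE_lborel_singleton[of b]
    by (intro nn_integral_cong_AE) (auto elim!: eventually_mono split: split_indicator)
  also have "\<dots> = emeasure gumbel {..<b}"
    by (simp add: emeasure_gumbel)
  finally show ?thesis
    by (simp add: emeasure_gumbel_lessThan)
qed

lemma measure_gumbel_atMost: "measure gumbel {..b} = gumbel_cdf b"
  by (simp add: measure_def emeasure_gumbel_atMost gumbel_cdf_def)

lemma distributed_gumbel_exponential:
  "distributed gumbel lborel (\<lambda>x. exp (-(x + euler_mascheroni))) (exponential_density 1)"
proof (rule exponential_distributedI)
  fix a :: real assume "0 \<le> a"
  show "emeasure gumbel {x \<in> space gumbel. exp (-(x + euler_mascheroni)) \<le> a}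
      = 1 - ennreal (exp (- a * 1))"
  proof (cases "a = 0")
    case False
    hence a: "0 < a" using \<open>0 \<le> a\<close> by simp
    have "exp (-(x + euler_mascheroni)) \<le> a \<longleftrightarrow> x \<notin> {..< - ln a - euler_mascheroni}" for x
    proof -
      have "exp (-(x + euler_mascheroni)) \<le> a \<longleftrightarrow> exp (-(x + euler_mascheroni)) \<le> exp (ln a)"
        using a by simp
      also have "\<dots> \<longleftrightarrow> -(x + euler_mascheroni) \<le> ln a"
        by (rule exp_le_cancel_iff)
      finally show ?thesis by auto
    qed
    hence "{x \<in> space gumbel. exp (-(x + euler_mascheroni)) \<le> a} = space gumbel - {..< - ln a - euler_mascheroni}"
      by auto
    moreover have "gumbel_cdf (- ln a - euler_mascheroni) = exp (- a)"
      using a by (simp add: gumbel_cdf_def)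
    ultimately show ?thesis
      using emeasure_compl[of "{..< - ln a - euler_mascheroni}" gumbel] emeasure_gumbel_lessThan
      by (simp add: gumbel.emeasure_space_1[simplified] ennreal_minus ennreal_1[symmetric] del: ennreal_1)
  qed simp
qed simp_all

lemma gumbel_mean_zero: "integrable gumbel (\<lambda>x. x)" "(\<integral>x. x \<partial>gumbel) = 0"
proof -
  let ?T = "\<lambda>x. exp (-(x + euler_mascheroni))"
  have "integrable gumbel (\<lambda>x. ln (?T x))"
    using exponential_density_times_ln(1)
    by (subst distributed_integrable[OF distributed_gumbel_exponential, symmetric]) auto
  hence neg: "integrable gumbel (\<lambda>x. - x - euler_mascheroni)"
    by simp
  have "integrable gumbel (\<lambda>x. - (- x - euler_mascheroni) - euler_mascheroni)"
    by (intro Bochner_Integration.integrable_diff integrable_minus neg gumbel.integrable_const)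
  thus "integrable gumbel (\<lambda>x. x)"
    by simp
  have "- euler_mascheroni = (\<integral>x. ln (?T x) \<partial>gumbel)"
    using exponential_density_times_ln(2)
    by (subst distributed_integral[OF distributed_gumbel_exponential, symmetric]) auto
  also have "\<dots> = - (\<integral>x. x \<partial>gumbel) - euler_mascheroni"
    using \<open>integrable gumbel (\<lambda>x. x)\<close> gumbel.prob_space
    by (simp add: Bochner_Integration.integral_diff)
  finally show "(\<integral>x. x \<partial>gumbel) = 0"
    by simp
qed

lemma prob_space_noise3: "prob_space noise3"
  unfolding noise3_def by (intro prob_space_pair prob_space_gumbel)

interpretation noise3: prob_space noise3
  by (rule prob_space_noise3)

lemma sets_noise3 [measurable_cong]: "sets noise3 = sets (borel \<Otimes>\<^sub>M (borel \<Otimes>\<^sub>M borel))"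
  unfolding noise3_def by (intro sets_pair_measure_cong) auto

lemma space_noise3 [simp]: "space noise3 = UNIV"
  by (simp add: noise3_def space_pair_measure)

interpretation gumbel_pair: pair_sigma_finite gumbel gumbel
  by (intro pair_sigma_finite.intro gumbel.sigma_finite_measure_axioms)

text \<open>Given the first coordinate x, the other two lie below x - a and x - b with probability
  F(x - a) F(x - b) = F(x)^(e^a + e^b), where F = gumbel_cdf.\<close>
lemma emeasure_noise3_first_max:
  "emeasure noise3 {e. a + fst (snd e) \<le> fst e \<and> b + snd (snd e) \<le> fst e}
     = ennreal (1 / (1 + (exp a + exp b)))"
proof -
  let ?X = "{e::real \<times> real \<times> real. a + fst (snd e) \<le> fst e \<and> b + snd (snd e) \<le> fst e}"
  have "{e \<in> space (gumbel \<Otimes>\<^sub>M (gumbel \<Otimes>\<^sub>M gumbel)). a + fst (snd e) \<le> fst e \<and> b + snd (snd e) \<le> fst e}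
      \<in> sets (gumbel \<Otimes>\<^sub>M (gumbel \<Otimes>\<^sub>M gumbel))"
    by measurable
  hence X: "?X \<in> sets (gumbel \<Otimes>\<^sub>M (gumbel \<Otimes>\<^sub>M gumbel))"
    by (simp add: space_pair_measure)
  have "emeasure noise3 ?X = (\<integral>\<^sup>+x. emeasure (gumbel \<Otimes>\<^sub>M gumbel) (Pair x -` ?X) \<partial>gumbel)"
    unfolding noise3_def by (rule gumbel_pair.emeasure_pair_measure_alt[OF X])
  also have "\<dots> = (\<integral>\<^sup>+x. ennreal (gumbel_cdf x powr (exp a + exp b)) \<partial>gumbel)"
  proof (intro nn_integral_cong)
    fix x
    have "Pair x -` ?X = {..x - a} \<times> {..x - b}" by auto
    thus "emeasure (gumbel \<Otimes>\<^sub>M gumbel) (Pair x -` ?X) = ennreal (gumbel_cdf x powr (exp a + exp b))"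
      by (simp add: gumbel.emeasure_pair_measure_Times emeasure_gumbel_atMost gumbel_cdf_diff
          powr_add flip: ennreal_mult)
  qed
  also have "\<dots> = (\<integral>\<^sup>+x. ennreal (gumbel_density x * gumbel_cdf x powr (exp a + exp b)) \<partial>lborel)"
    unfolding gumbel_def
    by (subst nn_integral_density) (auto simp: gumbel_density_def ennreal_mult')
  also have "\<dots> = ennreal (1 / (1 + (exp a + exp b)))"
    using exp_gt_zero[of a] exp_gt_zero[of b] by (intro nn_integral_gumbel_density_cdf_powr) linarith
  finally show ?thesis .
qed

text \<open>The CDF of the maximum is F(x) F(x - a) F(x - b) = F(x - ln (1 + e^a + e^b)).\<close>
lemma distr_noise3_max:
  "distr noise3 borel (\<lambda>e. max (fst e) (max (a + fst (snd e)) (b + snd (snd e))))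
     = distr gumbel borel (\<lambda>x. x + ln (1 + exp a + exp b))"
proof (rule cdf_unique)
  let ?M = "\<lambda>e. max (fst e) (max (a + fst (snd e)) (b + snd (snd e)))"
  and ?c = "ln (1 + exp a + exp b)"
  show "real_distribution (distr noise3 borel ?M)"
    by (intro noise3.real_distribution_distr) simp
  show "real_distribution (distr gumbel borel (\<lambda>x. x + ?c))"
    by (intro gumbel.real_distribution_distr) simp
  show "cdf (distr noise3 borel ?M) = cdf (distr gumbel borel (\<lambda>x. x + ?c))"
  proof
    fix x :: real
    have "cdf (distr noise3 borel ?M) x = measure noise3 (?M -` {..x} \<inter> space noise3)"
      unfolding cdf_def2 by (subst measure_distr) auto
    also have "?M -` {..x} \<inter> space noise3 = {..x} \<times> ({..x - a} \<times> {..x - b})"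
      by auto
    also have "measure noise3 \<dots> = gumbel_cdf x * (gumbel_cdf (x - a) * gumbel_cdf (x - b))"
      unfolding noise3_def measure_def
      by (simp add: gumbel_pair.emeasure_pair_measure_Times gumbel.emeasure_pair_measure_Times
          emeasure_gumbel_atMost ennreal_mult[symmetric] gumbel_cdf_def)
    also have "\<dots> = gumbel_cdf (x - ?c)"
      using add_pos_pos[OF add_pos_pos[OF zero_less_one exp_gt_zero] exp_gt_zero, of a b]
      by (simp add: gumbel_cdf_diff powr_add mult.assoc less_imp_le[OF gumbel_cdf_pos])
    also have "\<dots> = cdf (distr gumbel borel (\<lambda>x. x + ?c)) x"
    proof -
      have "(\<lambda>y. y + ?c) -` {..x} \<inter> space gumbel = {..x - ?c}"
        by auto
      thus ?thesis
        unfolding cdf_def2 by (simp add: measure_distr measure_gumbel_atMost)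
    qed
    finally show "cdf (distr noise3 borel ?M) x = cdf (distr gumbel borel (\<lambda>x. x + ?c)) x" .
  qed
qed

lemma integral_noise3_max:
  "(\<integral>e. max (fst e) (max (a + fst (snd e)) (b + snd (snd e))) \<partial>noise3) = ln (1 + exp a + exp b)"
proof -
  let ?M = "\<lambda>e. max (fst e) (max (a + fst (snd e)) (b + snd (snd e)))"
  and ?c = "ln (1 + exp a + exp b)"
  have "(\<integral>e. ?M e \<partial>noise3) = (\<integral>y. y \<partial>distr noise3 borel ?M)"
    by (subst integral_distr) auto
  also have "\<dots> = (\<integral>y. y \<partial>distr gumbel borel (\<lambda>x. x + ?c))"
    by (simp only: distr_noise3_max)
  also have "\<dots> = (\<integral>x. x + ?c \<partial>gumbel)"
    by (subst integral_distr) auto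
  also have "\<dots> = ?c"
    using gumbel_mean_zero gumbel.prob_space by (simp add: Bochner_Integration.integral_add)
  finally show ?thesis .
qed

section \<open>Choice probabilities of the logit model\<close>

lemma measurable_choice [measurable]: "choice VP vN a \<in> measurable noise3 (count_space UNIV)"
  unfolding choice_def[abs_def] u_out_def u_1_def u_2_def by measurable

lemma sets_choice_eq [measurable]: "{e \<in> space noise3. choice VP vN a e = c} \<in> sets noise3"
  by measurable

lemma outcome_prob_Out:
  "outcome_prob VP vN a Out = 1 / (1 + (exp (base VP vN (slot1 a)) + exp (base VP vN (slot2 a))))"
proof -
  have "{e \<in> space noise3. choice VP vN a e = Out} =
     {e. base VP vN (slot1 a) + fst (snd e) \<le> fst e \<and> base VP vN (slot2 a) + snd (snd e) \<le> fst e}"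
    by (auto simp: choice_def u_out_def u_1_def u_2_def)
  thus ?thesis
    unfolding outcome_prob_def measure_def by (simp add: emeasure_noise3_first_max)
qed

lemma engage_prob_eq_1_minus_Out: "engage_prob VP vN a = 1 - outcome_prob VP vN a Out"
proof -
  have "{e \<in> space noise3. choice VP vN a e \<noteq> Out} = space noise3 - {e \<in> space noise3. choice VP vN a e = Out}"
    by auto
  thus ?thesis
    unfolding engage_prob_def outcome_prob_def
    using noise3.prob_compl[OF sets_choice_eq[of VP vN a Out]] by simp
qed

lemma engage_prob_eq:
  "engage_prob VP vN a = (exp (base VP vN (slot1 a)) + exp (base VP vN (slot2 a)))
      / (1 + (exp (base VP vN (slot1 a)) + exp (base VP vN (slot2 a))))"
proof -
  have "1 + (exp (base VP vN (slot1 a)) + exp (base VP vN (slot2 a))) > 0"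
    by (simp add: add_pos_pos)
  thus ?thesis
    unfolding engage_prob_eq_1_minus_Out outcome_prob_Out by (simp add: field_simps)
qed

lemma sum_outcome_prob: "(\<Sum>c\<in>{Out, First, Second}. outcome_prob VP vN a c) = 1"
proof -
  let ?S = "\<lambda>c. {e \<in> space noise3. choice VP vN a e = c}"
  have "{e \<in> space noise3. choice VP vN a e \<noteq> Out} = ?S First \<union> ?S Second"
    by (auto intro: outcome.exhaust)
  hence "engage_prob VP vN a = outcome_prob VP vN a First + outcome_prob VP vN a Second"
    unfolding engage_prob_def outcome_prob_def
    using noise3.finite_measure_Union[OF sets_choice_eq[of VP vN a First] sets_choice_eq[of VP vN a Second]]
    by (simp add: disjoint_iff)
  thus ?thesis
    using engage_prob_eq_1_minus_Out[of VP vN a] by simp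
qed

lemma outcome_prob_PP_indep: "outcome_prob VP vN PP c = outcome_prob VP vN' PP c"
  by (simp add: outcome_prob_def choice_def u_1_def u_2_def)

lemma exp_max_util_eq:
  "exp_max_util VP vN a = ln (1 + exp (base VP vN (slot1 a)) + exp (base VP vN (slot2 a)))"
  unfolding exp_max_util_def u_out_def u_1_def u_2_def by (rule integral_noise3_max)

lemma histories_0: "histories 0 = {[]}"
  by (auto simp: histories_def)

lemma histories_Suc: "histories (Suc t) = (\<lambda>(h, s). h @ [s]) ` (histories t \<times> all_steps)"
proof (intro set_eqI iffI)
  fix x assume "x \<in> histories (Suc t)"
  hence x: "set x \<subseteq> all_steps" "length x = Suc t" by (auto simp: histories_def)
  then obtain h s where "x = h @ [s]" by (metis length_Suc_conv_rev)
  thus "x \<in> (\<lambda>(h, s). h @ [s]) ` (histories t \<times> all_steps)"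
    using x by (auto simp: histories_def intro!: image_eqI[of _ _ "(h, s)"])
qed (auto simp: histories_def)

lemma sum_histories_Suc:
  "(\<Sum>h\<in>histories (Suc t). f h) = (\<Sum>h\<in>histories t. \<Sum>s\<in>all_steps. f (h @ [s]))"
proof -
  have "inj_on (\<lambda>(h, s). h @ [s]) (histories t \<times> all_steps)"
    by (auto simp: inj_on_def)
  hence "(\<Sum>h\<in>histories (Suc t). f h) = (\<Sum>(h, s)\<in>histories t \<times> all_steps. f (h @ [s]))"
    unfolding histories_Suc by (simp add: sum.reindex split_def)
  thus ?thesis
    by (simp add: sum.cartesian_product split_def)
qed

lemma sum_all_actions: "(\<Sum>a\<in>all_actions. g a) = g PP + g PN + g NN"
  by (simp add: all_actions_def add.assoc)

lemma sum_all_steps: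
  "(\<Sum>s\<in>all_steps. f s) = (\<Sum>a\<in>all_actions. f (a, Out) + f (a, First) + f (a, Second))"
proof -
  have "(\<Sum>s\<in>all_steps. f s) = (\<Sum>a\<in>all_actions. \<Sum>c\<in>{Out, First, Second}. f (a, c))"
    unfolding all_steps_def sum.cartesian_product by (simp add: split_def)
  thus ?thesis by (simp add: add.assoc)
qed

lemma pmf_PP_PN_NN: "pmf q PP + pmf q PN + pmf q NN = 1"
proof -
  have "(\<Sum>a\<in>all_actions. pmf q a) = 1"
    by (rule sum_pmf_eq_1) (auto simp: all_actions_def intro: action.exhaust)
  thus ?thesis by (simp add: sum_all_actions)
qed

lemma hist_prob_snoc:
  "hist_prob VP pol vN (h @ [s])
     = hist_prob VP pol vN h * (pmf (pol h) (fst s) * outcome_prob VP vN (fst s) (snd s))"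
proof -
  have "(\<Prod>i<length h. pmf (pol (take i (h @ [s]))) (fst ((h @ [s]) ! i))
            * outcome_prob VP vN (fst ((h @ [s]) ! i)) (snd ((h @ [s]) ! i)))
      = hist_prob VP pol vN h"
    unfolding hist_prob_def by (intro prod.cong) (auto simp: nth_append)
  thus ?thesis
    unfolding hist_prob_def[of _ _ _ "h @ [s]"] by (simp add: prod.lessThan_Suc)
qed

lemma hist_prob_nonneg: "0 \<le> hist_prob VP pol vN h"
  unfolding hist_prob_def by (intro prod_nonneg) (auto simp: outcome_prob_def)

lemma sum_step_prob:
  "(\<Sum>s\<in>all_steps. pmf q (fst s) * outcome_prob VP vN (fst s) (snd s)) = 1"
proof -
  have "outcome_prob VP vN a Out + outcome_prob VP vN a First + outcome_prob VP vN a Second = 1" for a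
    using sum_outcome_prob[of VP vN a] by simp
  thus ?thesis
    unfolding sum_all_steps sum_all_actions by (simp flip: distrib_left add: pmf_PP_PN_NN)
qed

lemma sum_hist_prob: "(\<Sum>h\<in>histories t. hist_prob VP pol vN h) = 1"
proof (induction t)
  case 0
  thus ?case by (simp add: histories_0 hist_prob_def)
next
  case (Suc t)
  thus ?case
    by (simp add: sum_histories_Suc hist_prob_snoc sum_step_prob flip: sum_distrib_left)
qed

section \<open>An upper bound on the engagement of any policy\<close>

definition all_PP :: "history \<Rightarrow> bool" where
  "all_PP h \<longleftrightarrow> (\<forall>s\<in>set h. fst s = PP)"

definition all_PP_prob :: "real \<Rightarrow> policy \<Rightarrow> real \<Rightarrow> nat \<Rightarrow> real" where
  "all_PP_prob VP pol vN t = (\<Sum>h\<in>histories t. hist_prob VP pol vN h * of_bool (all_PP h))"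

lemma hist_prob_all_PP_indep:
  assumes "all_PP h"
  shows "hist_prob VP pol vN h = hist_prob VP pol vN' h"
  unfolding hist_prob_def
proof (intro prod.cong refl)
  fix i assume "i \<in> {..<length h}"
  hence "fst (h ! i) = PP"
    using assms by (auto simp: all_PP_def)
  thus "pmf (pol (take i h)) (fst (h ! i)) * outcome_prob VP vN (fst (h ! i)) (snd (h ! i)) =
        pmf (pol (take i h)) (fst (h ! i)) * outcome_prob VP vN' (fst (h ! i)) (snd (h ! i))"
    by (simp add: outcome_prob_PP_indep[of VP vN _ vN'])
qed

lemma all_PP_prob_indep: "all_PP_prob VP pol vN t = all_PP_prob VP pol vN' t"
  unfolding all_PP_prob_def
proof (intro sum.cong refl)
  fix h
  show "hist_prob VP pol vN h * of_bool (all_PP h) = hist_prob VP pol vN' h * of_bool (all_PP h)"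
    using hist_prob_all_PP_indep[of h VP pol vN vN'] by (cases "all_PP h") simp_all
qed

lemma all_PP_prob_0: "all_PP_prob VP pol vN 0 = 1"
  by (simp add: all_PP_prob_def histories_0 hist_prob_def all_PP_def)

lemma all_PP_prob_nonneg: "0 \<le> all_PP_prob VP pol vN t"
  unfolding all_PP_prob_def by (intro sum_nonneg mult_nonneg_nonneg hist_prob_nonneg) auto

lemma all_PP_prob_le_1: "all_PP_prob VP pol vN t \<le> 1"
proof -
  have "all_PP_prob VP pol vN t \<le> (\<Sum>h\<in>histories t. hist_prob VP pol vN h)"
    unfolding all_PP_prob_def by (intro sum_mono) (auto simp: hist_prob_nonneg)
  thus ?thesis by (simp add: sum_hist_prob)
qed

lemma all_PP_prob_Suc:
  "all_PP_prob VP pol vN (Suc t)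
     = (\<Sum>h\<in>histories t. hist_prob VP pol vN h * of_bool (all_PP h) * pmf (pol h) PP)"
proof -
  have all_PP_snoc: "of_bool (all_PP (h @ [s])) = (of_bool (all_PP h) * of_bool (fst s = PP) :: real)" for h s
    by (auto simp: all_PP_def)
  have PP_step: "(\<Sum>s\<in>all_steps. pmf q (fst s) * outcome_prob VP vN (fst s) (snd s) * of_bool (fst s = PP))
      = pmf q PP" for q
    using sum_outcome_prob[of VP vN PP] unfolding sum_all_steps sum_all_actions
    by (simp flip: distrib_left)
  have "all_PP_prob VP pol vN (Suc t) = (\<Sum>h\<in>histories t. hist_prob VP pol vN h * of_bool (all_PP h) *
      (\<Sum>s\<in>all_steps. pmf (pol h) (fst s) * outcome_prob VP vN (fst s) (snd s) * of_bool (fst s = PP)))"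
    unfolding all_PP_prob_def sum_histories_Suc hist_prob_snoc all_PP_snoc
    by (simp add: sum_distrib_left mult_ac)
  thus ?thesis
    by (simp only: PP_step)
qed

definition pop_engagement :: "real \<Rightarrow> real" where
  "pop_engagement VP = 2 * exp VP / (1 + 2 * exp VP)"

text \<open>The least engagement that a step recommending a niche item loses against V_N = -1
  (PN does better than NN there).\<close>
definition niche_loss :: "real \<Rightarrow> real" where
  "niche_loss VP = pop_engagement VP - engage_prob VP vN_low PN"

lemma engage_prob_PP: "engage_prob VP vN PP = pop_engagement VP"
  by (simp add: engage_prob_eq pop_engagement_def)

lemma engage_prob_nonneg: "0 \<le> engage_prob VP vN a"
  by (simp add: engage_prob_def)

lemma engage_prob_le_1: "engage_prob VP vN a \<le> 1"
  unfolding engage_prob_def by (rule noise3.prob_le_1)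

lemma pop_engagement_le_1: "pop_engagement VP \<le> 1"
  using engage_prob_le_1[of VP 0 PP] by (simp add: engage_prob_PP)

lemma divide_one_plus_less:
  fixes s s' :: real
  assumes "0 \<le> s" "s < s'"
  shows "s / (1 + s) < s' / (1 + s')"
  using assms by (simp add: field_simps)

lemma divide_one_plus_le:
  fixes s s' :: real
  assumes "0 \<le> s" "s \<le> s'"
  shows "s / (1 + s) \<le> s' / (1 + s')"
  using assms by (simp add: field_simps)

lemma niche_loss_pos:
  assumes "-1 < VP"
  shows "0 < niche_loss VP"
proof -
  have "exp (-1) < exp VP" using assms by simp
  hence "engage_prob VP vN_low PN < pop_engagement VP"
    unfolding engage_prob_eq pop_engagement_def vN_low_def
    using divide_one_plus_less[of "exp VP + exp (-1)" "exp VP + exp VP"] by simp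
  thus ?thesis by (simp add: niche_loss_def)
qed

lemma engage_prob_low_NN_le_PN:
  assumes "-1 \<le> VP"
  shows "engage_prob VP vN_low NN \<le> engage_prob VP vN_low PN"
proof -
  have "exp (-1) \<le> exp VP" using assms by simp
  thus ?thesis
    unfolding engage_prob_eq vN_low_def
    using divide_one_plus_le[of "exp (-1) + exp (-1)" "exp VP + exp (-1)"] by simp
qed

lemma expected_engagement_low_le:
  assumes "-1 < VP"
  shows "(\<Sum>a\<in>all_actions. pmf q a * engage_prob VP vN_low a)
           \<le> pop_engagement VP - niche_loss VP * (1 - pmf q PP)"
proof -
  have "(\<Sum>a\<in>all_actions. pmf q a * engage_prob VP vN_low a)
      \<le> pmf q PP * pop_engagement VP + (pmf q PN + pmf q NN) * engage_prob VP vN_low PN"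
    using engage_prob_low_NN_le_PN[of VP] assms
    by (simp add: sum_all_actions engage_prob_PP distrib_right mult_left_mono)
  also have "\<dots> = pop_engagement VP - niche_loss VP * (1 - pmf q PP)"
    using pmf_PP_PN_NN[of q] unfolding niche_loss_def
    by (simp add: algebra_simps flip: add_diff_eq eq_diff_eq)
  finally show ?thesis .
qed

lemma expected_engagement_le:
  "(\<Sum>a\<in>all_actions. pmf q a * engage_prob VP vN a)
     \<le> pop_engagement VP + (1 - pop_engagement VP) * (1 - pmf q PP)"
proof -
  have "(\<Sum>a\<in>all_actions. pmf q a * engage_prob VP vN a)
      \<le> pmf q PP * pop_engagement VP + pmf q PN * 1 + pmf q NN * 1"
    unfolding sum_all_actions engage_prob_PP
    by (intro add_mono mult_left_mono engage_prob_le_1) auto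
  also have "\<dots> = pop_engagement VP + (1 - pop_engagement VP) * (1 - pmf q PP)"
    using pmf_PP_PN_NN[of q] by (simp add: algebra_simps)
  finally show ?thesis .
qed

lemma expected_engagement_bounds:
  "0 \<le> (\<Sum>a\<in>all_actions. pmf q a * engage_prob VP vN a)"
  "(\<Sum>a\<in>all_actions. pmf q a * engage_prob VP vN a) \<le> 1"
proof -
  show "0 \<le> (\<Sum>a\<in>all_actions. pmf q a * engage_prob VP vN a)"
    by (intro sum_nonneg mult_nonneg_nonneg engage_prob_nonneg) auto
  have "(\<Sum>a\<in>all_actions. pmf q a * engage_prob VP vN a) \<le> (\<Sum>a\<in>all_actions. pmf q a)"
    by (intro sum_mono mult_right_le_one_le engage_prob_nonneg engage_prob_le_1) auto
  thus "(\<Sum>a\<in>all_actions. pmf q a * engage_prob VP vN a) \<le> 1"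
    using pmf_PP_PN_NN[of q] by (simp add: sum_all_actions)
qed

abbreviation cond_engagement :: "real \<Rightarrow> policy \<Rightarrow> nat \<Rightarrow> real \<Rightarrow> real" where
  "cond_engagement VP pol t vN \<equiv> cond_expect VP pol t (\<lambda>a vN. engage_prob VP vN a) vN"

lemma cond_engagement_bounds: "0 \<le> cond_engagement VP pol t vN" "cond_engagement VP pol t vN \<le> 1"
proof -
  show "0 \<le> cond_engagement VP pol t vN"
    unfolding cond_expect_def
    by (intro sum_nonneg mult_nonneg_nonneg hist_prob_nonneg expected_engagement_bounds)
  have "cond_engagement VP pol t vN \<le> (\<Sum>h\<in>histories t. hist_prob VP pol vN h * 1)"
    unfolding cond_expect_def
    by (intro sum_mono mult_left_mono expected_engagement_bounds hist_prob_nonneg)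
  thus "cond_engagement VP pol t vN \<le> 1"
    by (simp add: sum_hist_prob)
qed

lemma cond_engagement_low_le:
  assumes "-1 < VP"
  shows "cond_engagement VP pol t vN_low
           \<le> pop_engagement VP - niche_loss VP * (all_PP_prob VP pol vN_low t - all_PP_prob VP pol vN_low (Suc t))"
proof -
  let ?P = "hist_prob VP pol vN_low" and ?A = "\<lambda>h. of_bool (all_PP h) :: real"
  have "cond_engagement VP pol t vN_low
      \<le> (\<Sum>h\<in>histories t. ?P h * (pop_engagement VP - niche_loss VP * ?A h * (1 - pmf (pol h) PP)))"
    unfolding cond_expect_def
  proof (intro sum_mono mult_left_mono hist_prob_nonneg)
    fix h
    have "0 \<le> niche_loss VP * (1 - pmf (pol h) PP)"
      using niche_loss_pos[OF assms] pmf_le_1[of "pol h" PP] by simp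
    thus "(\<Sum>a\<in>all_actions. pmf (pol h) a * engage_prob VP vN_low a)
        \<le> pop_engagement VP - niche_loss VP * ?A h * (1 - pmf (pol h) PP)"
      using expected_engagement_low_le[OF assms, of "pol h"] by auto
  qed
  also have "\<dots> = (\<Sum>h\<in>histories t. pop_engagement VP * ?P h
      - niche_loss VP * (?P h * ?A h - ?P h * ?A h * pmf (pol h) PP))"
    by (intro sum.cong refl) (simp add: algebra_simps)
  also have "\<dots> = pop_engagement VP * (\<Sum>h\<in>histories t. ?P h)
      - niche_loss VP * ((\<Sum>h\<in>histories t. ?P h * ?A h) - (\<Sum>h\<in>histories t. ?P h * ?A h * pmf (pol h) PP))"
    by (simp add: sum_subtractf flip: sum_distrib_left)
  finally show ?thesis
    by (simp only: all_PP_prob_Suc) (simp add: sum_hist_prob all_PP_prob_def)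
qed

lemma cond_engagement_le:
  "cond_engagement VP pol t vN \<le> pop_engagement VP + (1 - pop_engagement VP) * (1 - all_PP_prob VP pol vN (Suc t))"
proof -
  let ?P = "hist_prob VP pol vN" and ?A = "\<lambda>h. of_bool (all_PP h) :: real"
  have "cond_engagement VP pol t vN
      \<le> (\<Sum>h\<in>histories t. ?P h * (pop_engagement VP + (1 - pop_engagement VP) * (1 - ?A h * pmf (pol h) PP)))"
    unfolding cond_expect_def
  proof (intro sum_mono mult_left_mono hist_prob_nonneg)
    fix h
    have "(1 - pop_engagement VP) * (1 - pmf (pol h) PP) \<le> (1 - pop_engagement VP) * (1 - ?A h * pmf (pol h) PP)"
      using pop_engagement_le_1[of VP] by (intro mult_left_mono) auto
    thus "(\<Sum>a\<in>all_actions. pmf (pol h) a * engage_prob VP vN a)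
        \<le> pop_engagement VP + (1 - pop_engagement VP) * (1 - ?A h * pmf (pol h) PP)"
      using expected_engagement_le[of "pol h" VP vN] by linarith
  qed
  also have "\<dots> = (\<Sum>h\<in>histories t. ?P h - (1 - pop_engagement VP) * (?P h * ?A h * pmf (pol h) PP))"
    by (intro sum.cong refl) (simp add: field_simps)
  also have "\<dots> = 1 - (1 - pop_engagement VP) * all_PP_prob VP pol vN (Suc t)"
    by (simp add: sum_subtractf sum_hist_prob all_PP_prob_Suc flip: sum_distrib_left)
  finally show ?thesis
    by argo
qed

lemma summable_discounted:
  fixes \<delta> M :: real
  assumes "0 \<le> \<delta>" "\<delta> < 1" "\<And>t. \<bar>f t\<bar> \<le> M"
  shows "summable (\<lambda>t. \<delta> ^ t * f t)"
proof (rule summable_comparison_test[OF _ summable_mult2[OF summable_geometric[of \<delta>], of M]])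
  show "\<exists>N. \<forall>t\<ge>N. norm (\<delta> ^ t * f t) \<le> \<delta> ^ t * M"
    using assms by (auto simp: abs_mult intro!: mult_left_mono)
qed (use assms in auto)

lemma suminf_discounted_const:
  fixes \<delta> c :: real
  assumes "0 \<le> \<delta>" "\<delta> < 1"
  shows "(\<Sum>t. \<delta> ^ t * c) = c / (1 - \<delta>)"
  using sums_mult2[OF geometric_sums[of \<delta>], of c] assms by (simp add: sums_iff)

text \<open>Summation by parts: since x 0 = 0, the discounted sum of the increments x (t + 1) - x t
  equals (1 - \<delta>) times that of x (t + 1), so the loss term b outweighs the gain term a.\<close>
lemma suminf_discounted_le_telescoping:
  fixes \<delta> a b e :: real and s x :: "nat \<Rightarrow> real"
  assumes \<delta>: "0 \<le> \<delta>" "\<delta> < 1" and s: "summable (\<lambda>t. \<delta> ^ t * s t)"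
    and x: "x 0 = 0" "\<And>t. 0 \<le> x t" "\<And>t. x t \<le> 1"
    and bound: "\<And>t. s t \<le> e + a * x (Suc t) - b * (x (Suc t) - x t)"
    and ab: "a \<le> b * (1 - \<delta>)"
  shows "(\<Sum>t. \<delta> ^ t * s t) \<le> e / (1 - \<delta>)"
proof -
  define S where "S = (\<Sum>t. \<delta> ^ t * x (Suc t))"
  have x_Suc: "(\<lambda>t. \<delta> ^ t * x (Suc t)) sums S"
    unfolding S_def using x by (intro summable_sums summable_discounted[OF \<delta>, of _ 1]) auto
  have "0 \<le> S"
    unfolding S_def using x \<delta> by (intro suminf_nonneg summable_discounted[OF \<delta>, of _ 1]) auto
  have "(\<lambda>t. \<delta> ^ Suc t * x (Suc t)) sums (\<delta> * S)"
    using sums_mult[OF x_Suc, of \<delta>] by (simp add: algebra_simps)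
  hence x_sums: "(\<lambda>t. \<delta> ^ t * x t) sums (\<delta> * S)"
    using sums_Suc_iff[of "\<lambda>t. \<delta> ^ t * x t"] x(1) by simp
  define B where "B t = e + a * x (Suc t) - b * (x (Suc t) - x t)" for t
  have "(\<lambda>t. e * \<delta> ^ t + (a - b) * (\<delta> ^ t * x (Suc t)) + b * (\<delta> ^ t * x t))
      sums (e * (1 / (1 - \<delta>)) + (a - b) * S + b * (\<delta> * S))"
    using \<delta> by (intro sums_add sums_mult geometric_sums x_Suc x_sums) auto
  hence B_sums: "(\<lambda>t. \<delta> ^ t * B t) sums (e / (1 - \<delta>) + (a - b * (1 - \<delta>)) * S)"
    by (simp add: B_def algebra_simps)
  have "(\<Sum>t. \<delta> ^ t * s t) \<le> (\<Sum>t. \<delta> ^ t * B t)"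
    using s B_sums bound \<delta> by (intro suminf_le mult_left_mono) (auto simp: B_def sums_iff)
  also have "\<dots> = e / (1 - \<delta>) + (a - b * (1 - \<delta>)) * S"
    using B_sums by (simp add: sums_iff)
  also have "\<dots> \<le> e / (1 - \<delta>)"
    using ab \<open>0 \<le> S\<close> by (simp add: mult_nonpos_nonneg)
  finally show ?thesis .
qed

section \<open>Optimality of the Always Popular Policy\<close>

lemma step_engagement_bounds:
  assumes "0 \<le> p" "p \<le> 1"
  shows "0 \<le> step_expect VP p pol t (\<lambda>a vN. engage_prob VP vN a)"
    "step_expect VP p pol t (\<lambda>a vN. engage_prob VP vN a) \<le> 1"
  using assms cond_engagement_bounds[of VP pol t] convex_bound_le[of _ 1 _ p "1 - p"]
  unfolding step_expect_def by auto

lemma step_engagement_le: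
  assumes "-1 < VP" "0 \<le> p" "p \<le> 1"
  shows "step_expect VP p pol t (\<lambda>a vN. engage_prob VP vN a)
     \<le> pop_engagement VP + p * (1 - pop_engagement VP) * (1 - all_PP_prob VP pol vN_low (Suc t))
       - (1 - p) * niche_loss VP * (all_PP_prob VP pol vN_low t - all_PP_prob VP pol vN_low (Suc t))"
proof -
  have "step_expect VP p pol t (\<lambda>a vN. engage_prob VP vN a)
      \<le> p * (pop_engagement VP + (1 - pop_engagement VP) * (1 - all_PP_prob VP pol vN_low (Suc t)))
        + (1 - p) * (pop_engagement VP
          - niche_loss VP * (all_PP_prob VP pol vN_low t - all_PP_prob VP pol vN_low (Suc t)))"
    unfolding step_expect_def using assms
    by (intro add_mono mult_left_mono cond_engagement_low_le
        cond_engagement_le[of VP pol t "vN_high p", unfolded all_PP_prob_indep[of _ _ "vN_high p" _ vN_low]]) auto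
  thus ?thesis
    by (simp add: algebra_simps)
qed

lemma Eng_le_pop_engagement:
  assumes VP: "-1 < VP" and p: "0 \<le> p" "p \<le> 1" and \<delta>: "0 \<le> \<delta>" "\<delta> < 1"
    and small_p: "p * (1 - pop_engagement VP) \<le> (1 - p) * niche_loss VP * (1 - \<delta>)"
  shows "Eng VP \<delta> p pol \<le> pop_engagement VP / (1 - \<delta>)"
  unfolding Eng_def
proof (rule suminf_discounted_le_telescoping[OF \<delta>, where x = "\<lambda>t. 1 - all_PP_prob VP pol vN_low t"
      and a = "p * (1 - pop_engagement VP)" and b = "(1 - p) * niche_loss VP"])
  show "summable (\<lambda>t. \<delta> ^ t * step_expect VP p pol t (\<lambda>a vN. engage_prob VP vN a))"
    using step_engagement_bounds[OF p] by (intro summable_discounted[OF \<delta>, of _ 1]) auto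
  show "step_expect VP p pol t (\<lambda>a vN. engage_prob VP vN a)
      \<le> pop_engagement VP + p * (1 - pop_engagement VP) * (1 - all_PP_prob VP pol vN_low (Suc t))
        - (1 - p) * niche_loss VP * ((1 - all_PP_prob VP pol vN_low (Suc t)) - (1 - all_PP_prob VP pol vN_low t))"
    for t using step_engagement_le[OF VP p, of pol t] by simp
qed (use small_p all_PP_prob_0 all_PP_prob_nonneg all_PP_prob_le_1 in \<open>auto simp: algebra_simps\<close>)

lemma cond_expect_APP: "cond_expect VP APP t g vN = g PP vN"
proof -
  have "cond_expect VP APP t g vN = (\<Sum>h\<in>histories t. hist_prob VP APP vN h) * g PP vN"
    unfolding cond_expect_def by (simp add: APP_def sum_all_actions sum_distrib_right)
  thus ?thesis by (simp add: sum_hist_prob)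
qed

lemma Eng_APP:
  assumes "0 \<le> \<delta>" "\<delta> < 1"
  shows "Eng VP \<delta> p APP = pop_engagement VP / (1 - \<delta>)"
proof -
  have "step_expect VP p APP t (\<lambda>a vN. engage_prob VP vN a) = pop_engagement VP" for t
    by (simp add: step_expect_def cond_expect_APP engage_prob_PP algebra_simps)
  thus ?thesis
    unfolding Eng_def using suminf_discounted_const[OF assms] by simp
qed

lemma Util_APP:
  assumes "0 \<le> \<delta>" "\<delta> < 1"
  shows "Util VP \<delta> p APP = ln (1 + 2 * exp VP) / (1 - \<delta>)"
proof -
  have "step_expect VP p APP t (\<lambda>a vN. exp_max_util VP vN a) = ln (1 + 2 * exp VP)" for t
    by (simp add: step_expect_def cond_expect_APP exp_max_util_eq algebra_simps)
  thus ?thesis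
    unfolding Util_def using suminf_discounted_const[OF assms] by simp
qed

theorem theorem1:
  fixes VP \<delta> :: real
  assumes "VP \<ge> 0" and "0 \<le> \<delta>" and "\<delta> < 1"
  shows "(\<exists>p0. 0 < p0 \<and> p0 \<le> 1 \<and>
           (\<forall>p. 0 < p \<and> p \<le> p0 \<and> p < 1 \<longrightarrow>
              (\<forall>pol. Eng VP \<delta> p pol \<le> Eng VP \<delta> p APP)))
       \<and> (\<forall>p. 0 < p \<and> p < 1 \<longrightarrow>
              Eng VP \<delta> p APP = 1 / (1 - \<delta>) * (2 * exp VP / (1 + 2 * exp VP))
            \<and> Util VP \<delta> p APP = 1 / (1 - \<delta>) * ln (1 + 2 * exp VP))"
proof (intro conjI allI impI)
  define c where "c = niche_loss VP * (1 - \<delta>)"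
  define p0 where "p0 = c / ((1 - pop_engagement VP) + c)"
  have "0 < c"
    using niche_loss_pos[of VP] assms unfolding c_def by simp
  moreover have "0 \<le> 1 - pop_engagement VP"
    using pop_engagement_le_1[of VP] by simp
  ultimately show "\<exists>p0. 0 < p0 \<and> p0 \<le> 1 \<and> (\<forall>p. 0 < p \<and> p \<le> p0 \<and> p < 1 \<longrightarrow>
      (\<forall>pol. Eng VP \<delta> p pol \<le> Eng VP \<delta> p APP))"
  proof (intro exI[of _ p0] conjI allI impI)
    fix p pol assume p: "0 < p \<and> p \<le> p0 \<and> p < 1"
    hence "p * (1 - pop_engagement VP) \<le> (1 - p) * niche_loss VP * (1 - \<delta>)"
      using \<open>0 < c\<close> \<open>0 \<le> 1 - pop_engagement VP\<close> unfolding p0_def c_def by (simp add: field_simps)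
    thus "Eng VP \<delta> p pol \<le> Eng VP \<delta> p APP"
      using Eng_le_pop_engagement[of VP p \<delta>] Eng_APP assms p by simp
  qed (auto simp: p0_def)
next
  fix p :: real
  show "Eng VP \<delta> p APP = 1 / (1 - \<delta>) * (2 * exp VP / (1 + 2 * exp VP))"
    using Eng_APP[OF assms(2,3)] by (simp add: pop_engagement_def)
  show "Util VP \<delta> p APP = 1 / (1 - \<delta>) * ln (1 + 2 * exp VP)"
    using Util_APP[OF assms(2,3)] by simp
qed

end
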